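(* Let $p \geq 4$ and let $L$ be the Laplacian of the graph $C_\infty \oplus K_p \oplus C_\infty$. Then there exists a linear subspace $E_K \subset l^2$ of dimension $p-3$ such that every $v \in E_K$ satisfies $Lv = pv$ and $v_j = 0$ for all $j \notin \{-p+2,\ldots,-1\}$.
   Context: For an integer $p \geq 3$, the graph $C_\infty \oplus K_p \oplus C_\infty$ has vertex set $\mathbb{Z}$; its edges are every pair of distinct vertices in $\{-p+1,\ldots,0\}$, the edges $\{j,j+1\}$ for all $j \leq -p$, and the edges $\{j,j+1\}$ for all $j \geq 0$. $l^2$ is the real Hilbert space of square-summable real sequences indexed by $\mathbb{Z}$. The Laplacian acts by $(Lv)_i = \deg(i)\, v_i - \sum_{j \sim i} v_j$. *)

theory Defs
  imports "HOL-Analysis.Analysis" "HOL-Library.Function_Algebras"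
begin

definition sscale :: "real \<Rightarrow> (int \<Rightarrow> real) \<Rightarrow> (int \<Rightarrow> real)" where
  "sscale c v = (\<lambda>i. c * v i)"

lemma vector_space_sscale: "vector_space sscale"
  by unfold_locales (auto simp: sscale_def fun_eq_iff algebra_simps)

definition l2 :: "(int \<Rightarrow> real) set" where
  "l2 = {v. (\<lambda>i. (v i)\<^sup>2) summable_on UNIV}"

text \<open>Adjacency of the graph C_inf + K_p + C_inf on vertex set Z.\<close>

definition adj :: "nat \<Rightarrow> int \<Rightarrow> int \<Rightarrow> bool" where
  "adj p i j \<longleftrightarrow> i \<noteq> j \<and>
     ((i \<in> {-int p + 1..0} \<and> j \<in> {-int p + 1..0})
      \<or> (\<bar>i - j\<bar> = 1 \<and> (min i j \<le> - int p \<or> min i j \<ge> 0)))"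

definition nbrs :: "nat \<Rightarrow> int \<Rightarrow> int set" where
  "nbrs p i = {j. adj p i j}"

definition deg :: "nat \<Rightarrow> int \<Rightarrow> nat" where
  "deg p i = card (nbrs p i)"

definition lap :: "nat \<Rightarrow> (int \<Rightarrow> real) \<Rightarrow> (int \<Rightarrow> real)" where
  "lap p v = (\<lambda>i. real (deg p i) * v i - (\<Sum>j\<in>nbrs p i. v j))"

end

theory Submission
  imports Defs
begin

text \<open>
  The clique vertices other than the two attachment points, S = {-p+2..-1}, all have the same
  closed neighbourhood, namely the whole clique K = {-p+1..0}. Hence for v supported on S,
  (Lv)_i = (p - 1) v_i - (\<Sum>S v - v_i) = p v_i - \<Sum>S v on S, while outside S the value (Lv)_i
  is -\<Sum>S v on the attachment points and 0 elsewhere. So every v supported on S with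
  \<Sum>S v = 0 is an eigenvector for p, and these v form a space of dimension |S| - 1 = p - 3.
\<close>

interpretation sscale: vector_space sscale
  by (rule vector_space_sscale)

lemma sum_apply: "(\<Sum>x\<in>A. f x) i = (\<Sum>x\<in>A. f x i :: 'b :: comm_monoid_add)"
  by (induction A rule: infinite_finite_induct) auto

lemma sum_sscale_apply: "(\<Sum>x\<in>A. sscale (u x) (f x)) i = (\<Sum>x\<in>A. u x * f x i)"
  by (simp add: sum_apply sscale_def)

lemma finite_support_in_l2:
  assumes "finite S" and "\<And>j. j \<notin> S \<Longrightarrow> v j = 0"
  shows "v \<in> l2"
proof -
  have "(\<lambda>i. (v i)\<^sup>2) summable_on S"
    using \<open>finite S\<close> by simp
  then show ?thesis
    unfolding l2_def using summable_on_cong_neutral[of UNIV S "\<lambda>i. (v i)\<^sup>2"] assms(2)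
    by auto
qed

definition zero_sum_on :: "int set \<Rightarrow> (int \<Rightarrow> real) set" where
  "zero_sum_on S = {v. (\<forall>j. j \<notin> S \<longrightarrow> v j = 0) \<and> (\<Sum>j\<in>S. v j) = 0}"

lemma zero_sum_onD:
  assumes "v \<in> zero_sum_on S"
  shows "\<And>j. j \<notin> S \<Longrightarrow> v j = 0" and "(\<Sum>j\<in>S. v j) = 0"
  using assms by (auto simp: zero_sum_on_def)

lemma zero_sum_on_subset_l2: "finite S \<Longrightarrow> zero_sum_on S \<subseteq> l2"
  by (auto simp: zero_sum_on_def intro: finite_support_in_l2)

lemma subspace_zero_sum_on: "sscale.subspace (zero_sum_on S)"
  unfolding sscale.subspace_def zero_sum_on_def
  by (auto simp: sscale_def sum.distrib simp flip: sum_distrib_left)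

definition unit_seq :: "int \<Rightarrow> int \<Rightarrow> real" where
  "unit_seq k = (\<lambda>i. if i = k then 1 else 0)"

lemma sum_unit_seq_apply: "finite A \<Longrightarrow> (\<Sum>k\<in>A. u k * unit_seq k i) = (if i \<in> A then u i else 0)"
  by (simp add: unit_seq_def if_distrib[of "(*) _"] sum.If_cases cong: if_cong)

lemma unit_seq_diff_in_zero_sum_on:
  assumes "finite S" "k \<in> S" "m \<in> S"
  shows "unit_seq k - unit_seq m \<in> zero_sum_on S"
  using assms by (auto simp: zero_sum_on_def unit_seq_def sum_subtractf)

lemma inj_unit_seq_diff: "inj (\<lambda>k. unit_seq k - unit_seq m)"
proof (rule injI)
  fix k l assume "unit_seq k - unit_seq m = unit_seq l - unit_seq m"
  then have "unit_seq k k = unit_seq l k"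
    by (metis diff_add_cancel)
  then show "k = l"
    by (simp add: unit_seq_def split: if_splits)
qed

lemma independent_unit_seq_diff:
  assumes "m \<notin> A"
  shows "sscale.independent ((\<lambda>k. unit_seq k - unit_seq m) ` A)"
    (is "sscale.independent (?e ` A)")
proof
  assume "sscale.dependent (?e ` A)"
  then obtain t u b where t: "finite t" "t \<subseteq> ?e ` A" "(\<Sum>x\<in>t. sscale (u x) x) = 0"
    and b: "b \<in> t" "u b \<noteq> 0"
    unfolding sscale.dependent_explicit by blast
  then obtain k where k: "k \<in> A" "b = ?e k"
    by auto
  \<comment> \<open>evaluating the relation at k singles out the coefficient of b, since m \<notin> A\<close>
  have at_k: "x k = (if x = b then 1 else 0)" if x: "x \<in> t" for x
  proof -
    obtain l where l: "l \<in> A" "x = ?e l"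
      using x t(2) by auto
    then have "x = b \<longleftrightarrow> l = k"
      using k by (simp add: inj_eq[OF inj_unit_seq_diff])
    moreover have "x k = (if l = k then 1 else 0)"
      using l k assms by (auto simp: unit_seq_def)
    ultimately show ?thesis
      by simp
  qed
  have "(\<Sum>x\<in>t. sscale (u x) x) k = (\<Sum>x\<in>t. if x = b then u x else 0)"
    by (auto simp: sum_sscale_apply at_k intro: sum.cong)
  also have "\<dots> = u b"
    using t(1) b(1) by simp
  finally show False
    using t(3) b(2) by simp
qed

lemma zero_sum_on_eq_combination:
  assumes "finite S" "m \<in> S" "v \<in> zero_sum_on S"
  shows "v = (\<Sum>k\<in>S - {m}. sscale (v k) (unit_seq k - unit_seq m))"
proof
  fix i
  have vm: "v m = - (\<Sum>k\<in>S - {m}. v k)"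
    using zero_sum_onD(2)[OF assms(3)] assms(1,2) by (simp add: sum.remove)
  have "(\<Sum>k\<in>S - {m}. sscale (v k) (unit_seq k - unit_seq m)) i
      = (\<Sum>k\<in>S - {m}. v k * unit_seq k i) - (\<Sum>k\<in>S - {m}. v k) * unit_seq m i"
    by (simp add: sum_sscale_apply right_diff_distrib sum_subtractf sum_distrib_right)
  also have "\<dots> = (if i \<in> S - {m} then v i else 0) + (if i = m then v m else 0)"
    using assms(1) vm by (simp add: sum_unit_seq_apply) (simp add: unit_seq_def)
  also have "\<dots> = v i"
    using zero_sum_onD(1)[OF assms(3), of i] assms(2) by auto
  finally show "v i = (\<Sum>k\<in>S - {m}. sscale (v k) (unit_seq k - unit_seq m)) i"
    by simp
qed

lemma dim_zero_sum_on:
  assumes "finite S" "m \<in> S"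
  shows "sscale.dim (zero_sum_on S) = card S - 1"
proof -
  let ?B = "(\<lambda>k. unit_seq k - unit_seq m) ` (S - {m})"
  have "?B \<subseteq> zero_sum_on S"
    using assms by (auto intro: unit_seq_diff_in_zero_sum_on)
  moreover have "zero_sum_on S \<subseteq> sscale.span ?B"
  proof
    fix v assume "v \<in> zero_sum_on S"
    have "(\<Sum>k\<in>S - {m}. sscale (v k) (unit_seq k - unit_seq m)) \<in> sscale.span ?B"
      by (intro sscale.span_sum sscale.span_scale sscale.span_base) auto
    then show "v \<in> sscale.span ?B"
      using zero_sum_on_eq_combination[OF assms \<open>v \<in> zero_sum_on S\<close>] by simp
  qed
  moreover have "sscale.independent ?B"
    by (rule independent_unit_seq_diff) simp
  ultimately have "sscale.dim (zero_sum_on S) = card ?B"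
    by (rule sscale.basis_card_eq_dim[symmetric])
  also have "\<dots> = card S - 1"
    using assms by (simp add: card_image inj_on_subset[OF inj_unit_seq_diff])
  finally show ?thesis .
qed

lemma finite_nbrs: "finite (nbrs p i)"
proof (rule finite_subset)
  show "nbrs p i \<subseteq> {i - 1..i + 1} \<union> {-int p + 1..0}"
    unfolding nbrs_def adj_def by auto
qed simp

lemma nbrs_clique_interior:
  assumes "i \<in> {-int p + 2..-1}"
  shows "nbrs p i = {-int p + 1..0} - {i}"
  using assms unfolding nbrs_def adj_def by auto

lemma deg_clique_interior:
  assumes "i \<in> {-int p + 2..-1}"
  shows "deg p i = p - 1"
  using assms by (simp add: deg_def nbrs_clique_interior)

lemma nbrs_inter_clique_interior:
  assumes "i \<notin> {-int p + 2..-1}"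
  shows "nbrs p i \<inter> {-int p + 2..-1} = (if i \<in> {-int p + 1..0} then {-int p + 2..-1} else {})"
  using assms unfolding nbrs_def adj_def by auto

lemma lap_zero_sum_on_clique_interior:
  assumes "v \<in> zero_sum_on {-int p + 2..-1}" (is "v \<in> zero_sum_on ?S")
  shows "lap p v = sscale (real p) v"
proof
  fix i
  note outside = zero_sum_onD(1)[OF assms] and total = zero_sum_onD(2)[OF assms]
  have nbrs_sum: "(\<Sum>j\<in>nbrs p i. v j) = (\<Sum>j\<in>nbrs p i \<inter> ?S. v j)"
    using outside finite_nbrs by (intro sum.mono_neutral_right) auto
  show "lap p v i = sscale (real p) v i"
  proof (cases "i \<in> ?S")
    case True
    have "nbrs p i \<inter> ?S = ?S - {i}"
      unfolding nbrs_clique_interior[OF True] by auto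
    then have "(\<Sum>j\<in>nbrs p i. v j) = - v i"
      using nbrs_sum total True by (simp add: sum_diff1)
    moreover have "real p = real (deg p i) + 1"
      using True by (simp add: deg_clique_interior of_nat_diff)
    ultimately show ?thesis
      by (simp add: lap_def sscale_def algebra_simps)
  next
    case False
    have "(\<Sum>j\<in>nbrs p i. v j) = 0"
      using nbrs_sum total nbrs_inter_clique_interior[OF False] by simp
    then show ?thesis
      using outside[OF False] by (simp add: lap_def sscale_def)
  qed
qed

theorem proposition10:
  fixes p :: nat
  assumes "p \<ge> 4"
  shows "\<exists>E. E \<subseteq> l2 \<and> module.subspace sscale E \<and> vector_space.dim sscale E = p - 3 \<and>
           (\<forall>v\<in>E. lap p v = sscale (real p) v \<and>
                   (\<forall>j. j \<notin> {-int p + 2..-1} \<longrightarrow> v j = 0))"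
proof (intro exI conjI ballI allI impI)
  let ?E = "zero_sum_on {-int p + 2..-1}"
  show "?E \<subseteq> l2"
    by (simp add: zero_sum_on_subset_l2)
  show "sscale.subspace ?E"
    by (rule subspace_zero_sum_on)
  have "sscale.dim ?E = card {-int p + 2..-1} - 1"
    using assms by (intro dim_zero_sum_on[of _ "-1"]) auto
  then show "sscale.dim ?E = p - 3"
    by simp
  fix v assume "v \<in> ?E"
  then show "lap p v = sscale (real p) v"
    by (rule lap_zero_sum_on_clique_interior)
  show "v j = 0" if "j \<notin> {-int p + 2..-1}" for j
    using zero_sum_onD(1)[OF \<open>v \<in> ?E\<close> that] .
qed

end
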